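(* Let $\lambda$ be counting measure on $\mathbb{N}$, and let $X_1(\lambda),X_2(\lambda),Y_1(\lambda),Y_2(\lambda)$ be saturated Banach sequence spaces in each of which the unit vectors $(e^n)$ form a Schauder basis; assume also that $(e^n)$ is a Schauder basis of $Y_1(\lambda)'$. Let $T\colon X_1(\lambda)\to Y_1(\lambda)$ and $S\colon X_2(\lambda)\to Y_2(\lambda)$ be nontrivial continuous linear operators with matrices $a_{ij}=T(e^j)_i$ and $b_{ij}=S(e^j)_i$. Assume that $Y_2^{Y_1''}$ is saturated and that $Y_2(\lambda)$ or $Y_1(\lambda)'$ is $\sigma$-order continuous. Given $h=(h_j)\in X_1^{X_2}$, the following are equivalent: (a) $T$ factors strongly through $S$ and $M_h$, i.e. there exists $g\in Y_2^{Y_1''}$ with $T(x)=g\,S(hx)$ for all $x\in X_1(\lambda)$. (b) There exists $g=(g_i)\in Y_2^{Y_1''}$ such that $a_{ij}/b_{ij}=g_ih_j$ whenever $b_{ij}\ne0$, and $a_{ij}=0$ whenever $b_{ij}=0$. (c) There exists $C>0$ such that $$\sum_{i=1}^n\sum_{j=1}^m r_{ij}a_{ij}\le C\Big\Vert\sum_{i=1}^n\Big(\sum_{j=1}^m h_jr_{ij}b_{ij}\Big)e^i\Big\Vert_{Y_2\pi Y_1'}$$ for all $n,m\in\mathbb{N}$ and all real $(r_{ij})$ with $|r_{ij}|\le1$. Moreover, if $Y_2(\lambda)\subset Y_1(\lambda)''$, then the condition (d) there exists $C>0$ such that $\sum_{j=1}^m r_ja_{nj}\le C\big|\sum_{j=1}^m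 h_jr_jb_{nj}\big|$ for all $n,m\in\mathbb{N}$ and all real $(r_j)$ with $|r_j|\le1$ implies (a)–(c). If moreover $Y_2^{Y_1''}=\ell^\infty$, then (d) is equivalent to (a)–(c).
   Context: A Banach sequence space is a Banach function space over counting measure on $\mathbb{N}$: a Banach space of real sequences such that $|x|\le|y|$ coordinatewise with $y$ in the space implies $x$ in the space and $\Vert x\Vert\le\Vert y\Vert$; saturated means for each $n$ some element has nonzero $n$-th coordinate; $\sigma$-order continuous means $x_k\downarrow0$ coordinatewise implies $\Vert x_k\Vert\downarrow0$. $X^Y=\{h: hx\in Y\ \forall x\in X\}$ with norm $\sup_{x\in B_X}\Vert hx\Vert_Y$; $X'=X^{\ell^1}$ (Köthe dual), $X''=(X')'$. The $\pi$-product $X\pi Y$ is the space of $h$ with $|h|\le\sum_n|f_ng_n|$ for some $f_n\in X$, $g_n\in Y$, $\sum_n\Vert f_n\Vert_X\Vert g_n\Vert_Y<\infty$, with norm the infimum of $\sum_n\Vert f_n\Vert_X\Vert g_n\Vert_Y$. *)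

theory Defs
  imports "HOL-Analysis.Analysis"
begin

text \<open>Sequences are functions nat => real (index 0 plays the role of index 1).
A sequence space is given by a carrier set X and a norm function N (only meaningful on X).\<close>

definition unitv :: "nat \<Rightarrow> nat \<Rightarrow> real" where
  "unitv n = (\<lambda>i. if i = n then 1 else 0)"

definition banach_seq_space :: "(nat \<Rightarrow> real) set \<Rightarrow> ((nat \<Rightarrow> real) \<Rightarrow> real) \<Rightarrow> bool" where
  "banach_seq_space X N \<longleftrightarrow>
     (\<lambda>i. 0) \<in> X \<and>
     (\<forall>x\<in>X. \<forall>y\<in>X. (\<lambda>i. x i + y i) \<in> X) \<and>
     (\<forall>c. \<forall>x\<in>X. (\<lambda>i. c * x i) \<in> X) \<and>
     (\<forall>x\<in>X. 0 \<le> N x \<and> (N x = 0 \<longleftrightarrow> x = (\<lambda>i. 0))) \<and>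
     (\<forall>c. \<forall>x\<in>X. N (\<lambda>i. c * x i) = \<bar>c\<bar> * N x) \<and>
     (\<forall>x\<in>X. \<forall>y\<in>X. N (\<lambda>i. x i + y i) \<le> N x + N y) \<and>
     (\<forall>x y. y \<in> X \<and> (\<forall>i. \<bar>x i\<bar> \<le> \<bar>y i\<bar>) \<longrightarrow> x \<in> X \<and> N x \<le> N y) \<and>
     (\<forall>s. (\<forall>k. s k \<in> X) \<and>
          (\<forall>\<epsilon>>0. \<exists>K. \<forall>k\<ge>K. \<forall>l\<ge>K. N (\<lambda>i. s k i - s l i) < \<epsilon>)
          \<longrightarrow> (\<exists>x\<in>X. (\<lambda>k. N (\<lambda>i. s k i - x i)) \<longlonglongrightarrow> 0))"

definition saturated :: "(nat \<Rightarrow> real) set \<Rightarrow> bool" where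
  "saturated X \<longleftrightarrow> (\<forall>n. \<exists>x\<in>X. x n \<noteq> 0)"

definition sigma_order_continuous :: "(nat \<Rightarrow> real) set \<Rightarrow> ((nat \<Rightarrow> real) \<Rightarrow> real) \<Rightarrow> bool" where
  "sigma_order_continuous X N \<longleftrightarrow>
     (\<forall>s. (\<forall>k. s k \<in> X) \<and> (\<forall>k i. 0 \<le> s (Suc k) i \<and> s (Suc k) i \<le> s k i) \<and>
          (\<forall>i. (\<lambda>k. s k i) \<longlonglongrightarrow> 0)
          \<longrightarrow> (\<lambda>k. N (s k)) \<longlonglongrightarrow> 0)"

text \<open>The unit vectors form a Schauder basis: they lie in X and every x in X is the
norm limit of its truncations (the coefficients are necessarily the coordinates).\<close>
definition unit_vectors_schauder_basis :: "(nat \<Rightarrow> real) set \<Rightarrow> ((nat \<Rightarrow> real) \<Rightarrow> real) \<Rightarrow> bool" where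
  "unit_vectors_schauder_basis X N \<longleftrightarrow>
     (\<forall>k. unitv k \<in> X) \<and>
     (\<forall>x\<in>X. (\<lambda>n. N (\<lambda>i. if i < n then 0 else x i)) \<longlonglongrightarrow> 0)"

definition mult_space :: "(nat \<Rightarrow> real) set \<Rightarrow> (nat \<Rightarrow> real) set \<Rightarrow> (nat \<Rightarrow> real) set" where
  "mult_space X Y = {h. \<forall>x\<in>X. (\<lambda>i. h i * x i) \<in> Y}"

definition mult_norm :: "(nat \<Rightarrow> real) set \<Rightarrow> ((nat \<Rightarrow> real) \<Rightarrow> real) \<Rightarrow> ((nat \<Rightarrow> real) \<Rightarrow> real)
    \<Rightarrow> (nat \<Rightarrow> real) \<Rightarrow> real" where
  "mult_norm X N M h = (SUP x\<in>{x\<in>X. N x \<le> 1}. M (\<lambda>i. h i * x i))"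

definition l1 :: "(nat \<Rightarrow> real) set" where
  "l1 = {x. summable (\<lambda>i. \<bar>x i\<bar>)}"

definition l1_norm :: "(nat \<Rightarrow> real) \<Rightarrow> real" where
  "l1_norm x = (\<Sum>i. \<bar>x i\<bar>)"

definition linf :: "(nat \<Rightarrow> real) set" where
  "linf = {x. \<exists>K. \<forall>i. \<bar>x i\<bar> \<le> K}"

definition kothe_dual :: "(nat \<Rightarrow> real) set \<Rightarrow> (nat \<Rightarrow> real) set" where
  "kothe_dual X = mult_space X l1"

definition kothe_norm :: "(nat \<Rightarrow> real) set \<Rightarrow> ((nat \<Rightarrow> real) \<Rightarrow> real) \<Rightarrow> (nat \<Rightarrow> real) \<Rightarrow> real" where
  "kothe_norm X N = mult_norm X N l1_norm"

definition pi_norm :: "(nat \<Rightarrow> real) set \<Rightarrow> ((nat \<Rightarrow> real) \<Rightarrow> real) \<Rightarrow>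
    (nat \<Rightarrow> real) set \<Rightarrow> ((nat \<Rightarrow> real) \<Rightarrow> real) \<Rightarrow> (nat \<Rightarrow> real) \<Rightarrow> real" where
  "pi_norm X N Y M h = Inf {(\<Sum>n. N (f n) * M (g n)) | f g.
      (\<forall>n. f n \<in> X \<and> g n \<in> Y) \<and> summable (\<lambda>n. N (f n) * M (g n)) \<and>
      (\<forall>i. summable (\<lambda>n. \<bar>f n i * g n i\<bar>) \<and> \<bar>h i\<bar> \<le> (\<Sum>n. \<bar>f n i * g n i\<bar>))}"

text \<open>Continuous linear operators between sequence spaces (only the values on X matter).\<close>
definition bounded_linear_op :: "(nat \<Rightarrow> real) set \<Rightarrow> ((nat \<Rightarrow> real) \<Rightarrow> real) \<Rightarrow>
    (nat \<Rightarrow> real) set \<Rightarrow> ((nat \<Rightarrow> real) \<Rightarrow> real) \<Rightarrow> ((nat \<Rightarrow> real) \<Rightarrow> (nat \<Rightarrow> real)) \<Rightarrow> bool" where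
  "bounded_linear_op X N Y M T \<longleftrightarrow>
     (\<forall>x\<in>X. T x \<in> Y) \<and>
     (\<forall>x\<in>X. \<forall>y\<in>X. T (\<lambda>i. x i + y i) = (\<lambda>i. T x i + T y i)) \<and>
     (\<forall>c. \<forall>x\<in>X. T (\<lambda>i. c * x i) = (\<lambda>i. c * T x i)) \<and>
     (\<exists>K. \<forall>x\<in>X. M (T x) \<le> K * N x)"

definition nontrivial_op :: "(nat \<Rightarrow> real) set \<Rightarrow> ((nat \<Rightarrow> real) \<Rightarrow> (nat \<Rightarrow> real)) \<Rightarrow> bool" where
  "nontrivial_op X T \<longleftrightarrow> (\<exists>x\<in>X. T x \<noteq> (\<lambda>i. 0))"

end

theory Submission
  imports Defs
begin

text \<open>
  Since the unit vectors form Schauder bases and coordinates depend continuously on vectors,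
  condition (a) says exactly that the matrices factor as a_ij = g_i h_j b_ij with g in the
  multiplier space G = Y2^(Y1''), and (b) is a restatement of this identity.

  If g is in G, the trilinear form (y, u) |-> sum_i |g_i y_i u_i| on Y2 x Y1' is bounded: otherwise
  norm-one elements x_k, u_k with values beyond 4^k k would combine into the lattice elements
  sum_k 2^-k |x_k| and sum_k 2^-k |u_k|, on which the form is infinite. This bound passes to
  every representation in the pi-product and gives (c).

  Conversely, testing (c) with matrices supported in a single row i shows that the i-th row of a
  is a multiple g_i of the row (h_j b_ij)_j. Testing it with matrices having one suitable entry
  in each of the rows i < n realises the row values sgn(g_i) |y_i u_i| up to a positive factor,
  and comparison with the rank-one representation y u yields sum_i |g_i y_i u_i| <= C |y| |u|,
  that is, g is in G. Under (d) the same row argument gives |g_i| <= C, and bounded multipliers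
  map Y2, a subspace of Y1'', into Y1''.
\<close>

locale seq_space =
  fixes X :: "(nat \<Rightarrow> real) set" and N :: "(nat \<Rightarrow> real) \<Rightarrow> real"
  assumes banach: "banach_seq_space X N"
begin

lemma zero_mem: "(\<lambda>i. 0) \<in> X"
  using banach unfolding banach_seq_space_def by blast

lemma add_mem: "x \<in> X \<Longrightarrow> y \<in> X \<Longrightarrow> (\<lambda>i. x i + y i) \<in> X"
  using banach unfolding banach_seq_space_def by blast

lemma scale_mem: "x \<in> X \<Longrightarrow> (\<lambda>i. c * x i) \<in> X"
  using banach unfolding banach_seq_space_def by blast

lemma norm_nonneg: "x \<in> X \<Longrightarrow> 0 \<le> N x"
  using banach unfolding banach_seq_space_def by blast

lemma norm_eq_zero_iff: "x \<in> X \<Longrightarrow> N x = 0 \<longleftrightarrow> x = (\<lambda>i. 0)"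
  using banach unfolding banach_seq_space_def by blast

lemma norm_scale: "x \<in> X \<Longrightarrow> N (\<lambda>i. c * x i) = \<bar>c\<bar> * N x"
  using banach unfolding banach_seq_space_def by blast

lemma norm_triangle: "x \<in> X \<Longrightarrow> y \<in> X \<Longrightarrow> N (\<lambda>i. x i + y i) \<le> N x + N y"
  using banach unfolding banach_seq_space_def by blast

lemma solid: "y \<in> X \<Longrightarrow> (\<And>i. \<bar>x i\<bar> \<le> \<bar>y i\<bar>) \<Longrightarrow> x \<in> X \<and> N x \<le> N y"
  using banach unfolding banach_seq_space_def by blast

lemma complete:
  "(\<And>k. s k \<in> X) \<Longrightarrow> (\<And>\<epsilon>. \<epsilon> > 0 \<Longrightarrow> \<exists>K. \<forall>k\<ge>K. \<forall>l\<ge>K. N (\<lambda>i. s k i - s l i) < \<epsilon>)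
    \<Longrightarrow> \<exists>x\<in>X. (\<lambda>k. N (\<lambda>i. s k i - x i)) \<longlonglongrightarrow> 0"
  using banach unfolding banach_seq_space_def by blast

lemma norm_zero: "N (\<lambda>i. 0) = 0"
  using norm_eq_zero_iff[OF zero_mem] by simp

lemma diff_mem: "x \<in> X \<Longrightarrow> y \<in> X \<Longrightarrow> (\<lambda>i. x i - y i) \<in> X"
  using add_mem[of x "\<lambda>i. (-1) * y i"] scale_mem[of y "-1"] by simp

lemma norm_diff_commute: "x \<in> X \<Longrightarrow> y \<in> X \<Longrightarrow> N (\<lambda>i. x i - y i) = N (\<lambda>i. y i - x i)"
  using norm_scale[of "\<lambda>i. x i - y i" "-1"] diff_mem by simp

lemma sum_mem_norm_le:
  "finite F \<Longrightarrow> (\<And>j. j \<in> F \<Longrightarrow> f j \<in> X) \<Longrightarrow>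
     (\<lambda>i. \<Sum>j\<in>F. f j i) \<in> X \<and> N (\<lambda>i. \<Sum>j\<in>F. f j i) \<le> (\<Sum>j\<in>F. N (f j))"
proof (induction F rule: finite_induct)
  case empty
  then show ?case using zero_mem norm_zero by simp
next
  case (insert a F)
  have fa: "f a \<in> X" and rest: "(\<lambda>i. \<Sum>j\<in>F. f j i) \<in> X"
    and le: "N (\<lambda>i. \<Sum>j\<in>F. f j i) \<le> (\<Sum>j\<in>F. N (f j))"
    using insert by auto
  have "(\<lambda>i. \<Sum>j\<in>insert a F. f j i) = (\<lambda>i. f a i + (\<Sum>j\<in>F. f j i))"
    using insert.hyps by simp
  then show ?case
    using add_mem[OF fa rest] norm_triangle[OF fa rest] le insert.hyps by simp
qed

lemma abs_coord_mult_norm_unitv_le: "x \<in> X \<Longrightarrow> unitv k \<in> X \<Longrightarrow> \<bar>x k\<bar> * N (unitv k) \<le> N x"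
proof -
  assume x: "x \<in> X" and u: "unitv k \<in> X"
  have "N (\<lambda>i. x k * unitv k i) \<le> N x"
    by (rule conjunct2[OF solid[OF x]]) (simp add: unitv_def)
  with norm_scale[OF u] show ?thesis by simp
qed

lemma norm_unitv_pos: "unitv k \<in> X \<Longrightarrow> 0 < N (unitv k)"
proof -
  assume u: "unitv k \<in> X"
  have "unitv k \<noteq> (\<lambda>i. 0)" by (metis unitv_def zero_neq_one)
  with norm_eq_zero_iff[OF u] norm_nonneg[OF u] show ?thesis by linarith
qed

lemma coord_tendsto:
  assumes s: "\<And>n. s n \<in> X" and x: "x \<in> X" and u: "unitv k \<in> X"
    and lim: "(\<lambda>n. N (\<lambda>i. s n i - x i)) \<longlonglongrightarrow> 0"
  shows "(\<lambda>n. s n k) \<longlonglongrightarrow> x k"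
proof -
  have pos: "0 < N (unitv k)" using norm_unitv_pos[OF u] .
  have bound: "\<bar>s n k - x k\<bar> \<le> N (\<lambda>i. s n i - x i) / N (unitv k)" for n
    using abs_coord_mult_norm_unitv_le[OF diff_mem[OF s x] u] pos by (simp add: field_simps)
  have "(\<lambda>n. N (\<lambda>i. s n i - x i) / N (unitv k)) \<longlonglongrightarrow> 0"
    using tendsto_divide_zero[OF lim] by simp
  then have "(\<lambda>n. s n k - x k) \<longlonglongrightarrow> 0"
    by (rule Lim_null_comparison[rotated]) (use bound in \<open>auto intro: always_eventually\<close>)
  then show ?thesis by (simp add: LIM_zero_iff)
qed

lemma norm_summable_series_converges:
  assumes f: "\<And>k. f k \<in> X" and sm: "summable (\<lambda>k. N (f k))"
  shows "\<exists>x\<in>X. (\<lambda>n. N (\<lambda>i. (\<Sum>k<n. f k i) - x i)) \<longlonglongrightarrow> 0"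
proof (rule complete)
  show "(\<lambda>i. \<Sum>k<n. f k i) \<in> X" for n
    using sum_mem_norm_le[of "{..<n}" f] f by blast
next
  fix \<epsilon> :: real assume "\<epsilon> > 0"
  then obtain K where K: "\<And>m n. m \<ge> K \<Longrightarrow> norm (\<Sum>k\<in>{m..<n}. N (f k)) < \<epsilon>"
    using sm unfolding summable_Cauchy by blast
  have tail: "N (\<lambda>i. (\<Sum>k<l. f k i) - (\<Sum>k<m. f k i)) < \<epsilon>" if "K \<le> m" "m \<le> l" for m l
  proof -
    have "(\<lambda>i. (\<Sum>k<l. f k i) - (\<Sum>k<m. f k i)) = (\<lambda>i. \<Sum>k\<in>{m..<l}. f k i)"
      using that by (auto simp: atLeast0LessThan[symmetric] sum_diff_nat_ivl)
    moreover have "N (\<lambda>i. \<Sum>k\<in>{m..<l}. f k i) \<le> (\<Sum>k\<in>{m..<l}. N (f k))"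
      using sum_mem_norm_le[of "{m..<l}" f] f by blast
    moreover have "(\<Sum>k\<in>{m..<l}. N (f k)) < \<epsilon>"
      using K[OF \<open>K \<le> m\<close>, of l] by simp
    ultimately show ?thesis by simp
  qed
  have "N (\<lambda>i. (\<Sum>k<m. f k i) - (\<Sum>k<l. f k i)) < \<epsilon>" if "m \<ge> K" "l \<ge> K" for m l
  proof (cases "m \<le> l")
    case True
    have "(\<lambda>i. \<Sum>k<n. f k i) \<in> X" for n
      using sum_mem_norm_le[of "{..<n}" f] f by blast
    then show ?thesis
      using tail[OF \<open>m \<ge> K\<close> True] norm_diff_commute[of "\<lambda>i. \<Sum>k<m. f k i" "\<lambda>i. \<Sum>k<l. f k i"]
      by simp
  next
    case False
    then show ?thesis using tail[OF \<open>l \<ge> K\<close>] by simp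
  qed
  then show "\<exists>K. \<forall>m\<ge>K. \<forall>l\<ge>K. N (\<lambda>i. (\<Sum>k<m. f k i) - (\<Sum>k<l. f k i)) < \<epsilon>" by blast
qed

end

locale unit_seq_space = seq_space +
  assumes unitv_mem: "unitv k \<in> X"
begin

lemma norm_summable_series_sums:
  assumes f: "\<And>k. f k \<in> X" and sm: "summable (\<lambda>k. N (f k))"
  shows "\<exists>x\<in>X. \<forall>i. (\<lambda>k. f k i) sums x i"
proof -
  obtain x where x: "x \<in> X" and lim: "(\<lambda>n. N (\<lambda>i. (\<Sum>k<n. f k i) - x i)) \<longlonglongrightarrow> 0"
    using norm_summable_series_converges[OF f sm] by blast
  have "(\<lambda>n. \<Sum>k<n. f k i) \<longlonglongrightarrow> x i" for i
    by (rule coord_tendsto[OF _ x unitv_mem lim]) (use sum_mem_norm_le f in blast)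
  then show ?thesis using x unfolding sums_def by blast
qed

lemma truncation_mem: "(\<lambda>i. if i < n then v i else 0) \<in> X"
proof -
  have "(\<lambda>i. if i < n then v i else 0) = (\<lambda>i. \<Sum>k<n. v k * unitv k i)"
  proof
    show "(if i < n then v i else 0) = (\<Sum>k<n. v k * unitv k i)" for i
      by (induction n) (auto simp: unitv_def less_Suc_eq)
  qed
  then show ?thesis
    using sum_mem_norm_le[of "{..<n}" "\<lambda>k i. v k * unitv k i"] scale_mem unitv_mem by auto
qed

end

definition halved_series_in :: "(nat \<Rightarrow> real) set \<Rightarrow> (nat \<Rightarrow> real) set \<Rightarrow> bool" where
  "halved_series_in B X \<longleftrightarrow> (\<forall>a. (\<forall>k. a k \<in> B) \<longrightarrow>
     (\<forall>i. summable (\<lambda>k. (1/2)^k * \<bar>a k i\<bar>)) \<and> (\<lambda>i. \<Sum>k. (1/2)^k * \<bar>a k i\<bar>) \<in> X)"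

lemma (in unit_seq_space) halved_series_in_unit_ball: "halved_series_in {x\<in>X. N x \<le> 1} X"
  unfolding halved_series_in_def
proof (intro allI impI)
  fix a :: "nat \<Rightarrow> nat \<Rightarrow> real" assume a: "\<forall>k. a k \<in> {x\<in>X. N x \<le> 1}"
  define f where "f k = (\<lambda>i. (1/2::real)^k * \<bar>a k i\<bar>)" for k
  have abs_a: "(\<lambda>i. \<bar>a k i\<bar>) \<in> X \<and> N (\<lambda>i. \<bar>a k i\<bar>) \<le> N (a k)" for k
    using a by (intro solid) auto
  then have f_mem: "f k \<in> X" for k
    unfolding f_def using scale_mem by blast
  have "N (f k) \<le> (1/2)^k" for k
  proof -
    have "N (a k) \<le> 1" using a by blast
    then have "N (\<lambda>i. \<bar>a k i\<bar>) \<le> 1" using abs_a[of k] by linarith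
    then show ?thesis
      using abs_a[of k] norm_scale[of "\<lambda>i. \<bar>a k i\<bar>" "(1/2)^k"] by (simp add: f_def mult_left_le)
  qed
  then have "summable (\<lambda>k. N (f k))"
    by (intro summable_comparison_test[OF _ summable_geometric[of "1/2::real"]])
      (auto intro!: exI[of _ 0] simp: norm_nonneg[OF f_mem])
  then obtain x where "x \<in> X" "\<forall>i. (\<lambda>k. f k i) sums x i"
    using norm_summable_series_sums[of f] f_mem by blast
  then show "(\<forall>i. summable (\<lambda>k. (1/2)^k * \<bar>a k i\<bar>)) \<and> (\<lambda>i. \<Sum>k. (1/2)^k * \<bar>a k i\<bar>) \<in> X"
    unfolding f_def by (metis (no_types, lifting) ext sums_summable sums_unique)
qed

lemma halved_series_in_constants: "halved_series_in {\<lambda>i. 1} (range (\<lambda>c i. c))"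
  unfolding halved_series_in_def using summable_geometric[of "1/2::real"] by auto

lemma trilinear_sum_bounded:
  fixes w :: "nat \<Rightarrow> real"
  assumes hs1: "halved_series_in B1 X1" and hs2: "halved_series_in B2 X2"
    and B1: "B1 \<subseteq> X1" and B2: "B2 \<subseteq> X2"
    and sm: "\<And>x y. x \<in> X1 \<Longrightarrow> y \<in> X2 \<Longrightarrow> summable (\<lambda>i. \<bar>w i * x i * y i\<bar>)"
  shows "\<exists>K. \<forall>x\<in>B1. \<forall>y\<in>B2. (\<Sum>i. \<bar>w i * x i * y i\<bar>) \<le> K"
proof (rule ccontr)
  assume "\<not> ?thesis"
  then have "\<forall>k::nat. \<exists>x\<in>B1. \<exists>y\<in>B2. (\<Sum>i. \<bar>w i * x i * y i\<bar>) > 4^k * real k"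
    by (meson not_le)
  then obtain xs ys where xs: "\<And>k. xs k \<in> B1" and ys: "\<And>k. ys k \<in> B2"
    and big: "\<And>k. (\<Sum>i. \<bar>w i * xs k i * ys k i\<bar>) > 4^k * real k"
    by metis
  define x where "x = (\<lambda>i. \<Sum>k. (1/2::real)^k * \<bar>xs k i\<bar>)"
  define y where "y = (\<lambda>i. \<Sum>k. (1/2::real)^k * \<bar>ys k i\<bar>)"
  have x: "x \<in> X1" and xsm: "\<And>i. summable (\<lambda>k. (1/2::real)^k * \<bar>xs k i\<bar>)"
    using hs1 xs unfolding halved_series_in_def x_def by blast+
  have y: "y \<in> X2" and ysm: "\<And>i. summable (\<lambda>k. (1/2::real)^k * \<bar>ys k i\<bar>)"
    using hs2 ys unfolding halved_series_in_def y_def by blast+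
  have x_ge: "(1/2)^k * \<bar>xs k i\<bar> \<le> x i" for k i
    unfolding x_def using sum_le_suminf[OF xsm, of "{k}"] by simp
  have y_ge: "(1/2)^k * \<bar>ys k i\<bar> \<le> y i" for k i
    unfolding y_def using sum_le_suminf[OF ysm, of "{k}"] by simp
  \<comment> \<open>x and y dominate their k-th terms with weight (1/2)^k, so the form at (x, y) dominates
    (1/4)^k times its value at (xs k, ys k), which exceeds k.\<close>
  have "real k < (\<Sum>i. \<bar>w i * x i * y i\<bar>)" for k
  proof -
    have pointwise: "(1/4)^k * \<bar>w i * xs k i * ys k i\<bar> \<le> \<bar>w i * x i * y i\<bar>" for i
    proof -
      have "(1/4::real)^k * \<bar>w i * xs k i * ys k i\<bar>
          = \<bar>w i\<bar> * (((1/2)^k * \<bar>xs k i\<bar>) * ((1/2)^k * \<bar>ys k i\<bar>))"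
        by (simp add: abs_mult power_mult_distrib[symmetric])
      also have "\<dots> \<le> \<bar>w i\<bar> * (x i * y i)"
        by (intro mult_left_mono mult_mono x_ge y_ge) (auto intro: order_trans[OF _ x_ge])
      also have "\<dots> = \<bar>w i * x i * y i\<bar>"
        using order_trans[OF _ x_ge, of 0 0 i] order_trans[OF _ y_ge, of 0 0 i] by (simp add: abs_mult)
      finally show ?thesis .
    qed
    have smk: "summable (\<lambda>i. \<bar>w i * xs k i * ys k i\<bar>)" using sm xs ys B1 B2 by blast
    have "real k = (1/4)^k * (4^k * real k)" by (simp add: power_mult_distrib[symmetric])
    also have "\<dots> < (1/4)^k * (\<Sum>i. \<bar>w i * xs k i * ys k i\<bar>)" using big by simp
    also have "\<dots> = (\<Sum>i. (1/4)^k * \<bar>w i * xs k i * ys k i\<bar>)" using suminf_mult[OF smk] by simp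
    also have "\<dots> \<le> (\<Sum>i. \<bar>w i * x i * y i\<bar>)"
      by (rule suminf_le[OF pointwise summable_mult[OF smk] sm[OF x y]])
    finally show ?thesis .
  qed
  then show False using reals_Archimedean2 less_asym by blast
qed

lemma kothe_dual_summable: "u \<in> kothe_dual X \<Longrightarrow> z \<in> X \<Longrightarrow> summable (\<lambda>i. \<bar>u i * z i\<bar>)"
  unfolding kothe_dual_def mult_space_def l1_def by blast

lemma finite_support_mem_kothe_dual:
  assumes "\<And>i. n \<le> i \<Longrightarrow> u i = 0"
  shows "u \<in> kothe_dual X"
proof -
  have "summable (\<lambda>i. \<bar>u i * z i\<bar>)" for z
    by (rule summable_finite[of "{..<n}"]) (use assms in \<open>auto simp: not_less\<close>)
  then show ?thesis unfolding kothe_dual_def mult_space_def l1_def by blast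
qed

lemma zero_mem_kothe_dual: "(\<lambda>i. 0) \<in> kothe_dual X"
  by (rule finite_support_mem_kothe_dual[of 0]) simp

lemma unitv_mem_kothe_dual: "unitv k \<in> kothe_dual X"
  by (rule finite_support_mem_kothe_dual[of "Suc k"]) (simp add: unitv_def)

lemma l1_norm_mult_unitv: "l1_norm (\<lambda>j. u j * unitv i j) = \<bar>u i\<bar>"
proof -
  have "(\<lambda>j. \<bar>u j * unitv i j\<bar>) = (\<lambda>j. if j = i then \<bar>u i\<bar> else 0)"
    by (auto simp: unitv_def)
  then show ?thesis
    unfolding l1_norm_def using sums_unique[OF sums_single[of i "\<lambda>_. \<bar>u i\<bar>"]] by simp
qed

definition kothe_ball :: "(nat \<Rightarrow> real) set \<Rightarrow> ((nat \<Rightarrow> real) \<Rightarrow> real) \<Rightarrow> (nat \<Rightarrow> real) set" where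
  "kothe_ball X N = {u \<in> kothe_dual X. \<forall>z\<in>X. l1_norm (\<lambda>i. u i * z i) \<le> N z}"

lemma halved_series_partial_l1_le:
  assumes a: "\<And>k. a k \<in> kothe_ball X N" and sm: "\<And>i. summable (\<lambda>k. (1/2::real)^k * \<bar>a k i\<bar>)"
    and z: "z \<in> X"
  shows "(\<Sum>i<n. \<bar>(\<Sum>k. (1/2)^k * \<bar>a k i\<bar>) * z i\<bar>) \<le> 2 * N z"
proof -
  have smz: "summable (\<lambda>i. \<bar>a k i * z i\<bar>)" for k
    using a z kothe_dual_summable unfolding kothe_ball_def by blast
  have partial_le: "(\<Sum>i<n. \<bar>a k i * z i\<bar>) \<le> N z" for k
  proof -
    have "(\<Sum>i<n. \<bar>a k i * z i\<bar>) \<le> (\<Sum>i. \<bar>a k i * z i\<bar>)"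
      by (rule sum_le_suminf[OF smz]) auto
    also have "\<dots> \<le> N z" using a z unfolding kothe_ball_def l1_norm_def by blast
    finally show ?thesis .
  qed
  have smi: "summable (\<lambda>k. (1/2::real)^k * \<bar>a k i * z i\<bar>)" for i
    using summable_mult2[OF sm[of i], of "\<bar>z i\<bar>"] by (simp add: abs_mult mult.assoc)
  have "(\<Sum>i<n. \<bar>(\<Sum>k. (1/2)^k * \<bar>a k i\<bar>) * z i\<bar>) = (\<Sum>i<n. \<Sum>k. (1/2)^k * \<bar>a k i * z i\<bar>)"
  proof (rule sum.cong[OF refl])
    fix i
    have "\<bar>(\<Sum>k. (1/2)^k * \<bar>a k i\<bar>) * z i\<bar> = (\<Sum>k. (1/2)^k * \<bar>a k i\<bar>) * \<bar>z i\<bar>"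
      using suminf_nonneg[OF sm[of i]] by (simp add: abs_mult)
    then show "\<bar>(\<Sum>k. (1/2)^k * \<bar>a k i\<bar>) * z i\<bar> = (\<Sum>k. (1/2)^k * \<bar>a k i * z i\<bar>)"
      using suminf_mult2[OF sm[of i], of "\<bar>z i\<bar>"] by (simp add: abs_mult mult.assoc)
  qed
  also have "\<dots> = (\<Sum>k. \<Sum>i<n. (1/2)^k * \<bar>a k i * z i\<bar>)"
    by (rule suminf_sum[symmetric]) (rule smi)
  also have "\<dots> \<le> (\<Sum>k. (1/2)^k * N z)"
  proof (rule suminf_le)
    show "summable (\<lambda>k. \<Sum>i<n. (1/2::real)^k * \<bar>a k i * z i\<bar>)"
      by (rule summable_sum) (rule smi)
    show "summable (\<lambda>k. (1/2::real)^k * N z)"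
      by (simp add: summable_mult2 summable_geometric)
    show "(\<Sum>i<n. (1/2::real)^k * \<bar>a k i * z i\<bar>) \<le> (1/2)^k * N z" for k
      using partial_le[of k] by (simp add: sum_distrib_left[symmetric] mult_left_mono)
  qed
  also have "\<dots> = 2 * N z"
    using suminf_mult2[OF summable_geometric[of "1/2::real"], of "N z"]
      suminf_geometric[of "1/2::real"] by simp
  finally show ?thesis .
qed

context unit_seq_space
begin

lemma halved_series_in_kothe_ball: "halved_series_in (kothe_ball X N) (kothe_dual X)"
  unfolding halved_series_in_def
proof (intro allI impI)
  fix a :: "nat \<Rightarrow> nat \<Rightarrow> real" assume a: "\<forall>k. a k \<in> kothe_ball X N"
  have coord_le: "\<bar>a k i\<bar> \<le> N (unitv i)" for k i
  proof -
    have "l1_norm (\<lambda>j. a k j * unitv i j) \<le> N (unitv i)"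
      using a unitv_mem unfolding kothe_ball_def by blast
    then show ?thesis using l1_norm_mult_unitv[of "a k" i] by simp
  qed
  have sm: "summable (\<lambda>k. (1/2::real)^k * \<bar>a k i\<bar>)" for i
    by (rule summable_comparison_test[OF _ summable_mult2[OF summable_geometric[of "1/2::real"]],
          of _ "N (unitv i)"])
      (use coord_le in \<open>auto intro!: exI[of _ 0] mult_left_mono\<close>)
  have "summable (\<lambda>i. \<bar>(\<Sum>k. (1/2)^k * \<bar>a k i\<bar>) * z i\<bar>)" if z: "z \<in> X" for z
    by (rule summableI_nonneg_bounded[OF _ halved_series_partial_l1_le[OF _ sm z]]) (use a in auto)
  then have "(\<lambda>i. \<Sum>k. (1/2)^k * \<bar>a k i\<bar>) \<in> kothe_dual X"
    unfolding kothe_dual_def mult_space_def l1_def by blast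
  with sm show "(\<forall>i. summable (\<lambda>k. (1/2)^k * \<bar>a k i\<bar>)) \<and> (\<lambda>i. \<Sum>k. (1/2)^k * \<bar>a k i\<bar>) \<in> kothe_dual X"
    by blast
qed

\<comment> \<open>The Koethe norm is a supremum; its finiteness is the uniform boundedness argument again,
  pairing the unit ball with the constant sequences.\<close>
lemma kothe_norm_bdd:
  assumes u: "u \<in> kothe_dual X"
  shows "bdd_above ((\<lambda>z. l1_norm (\<lambda>i. u i * z i)) ` {z\<in>X. N z \<le> 1})"
proof -
  have "\<exists>K. \<forall>x\<in>{z\<in>X. N z \<le> 1}. \<forall>y\<in>{\<lambda>i. 1}. (\<Sum>i. \<bar>u i * x i * y i\<bar>) \<le> K"
  proof (rule trilinear_sum_bounded[OF halved_series_in_unit_ball halved_series_in_constants])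
    fix x y :: "nat \<Rightarrow> real" assume "x \<in> X" "y \<in> range (\<lambda>c i. c)"
    then show "summable (\<lambda>i. \<bar>u i * x i * y i\<bar>)"
      using summable_mult[OF kothe_dual_summable[OF u \<open>x \<in> X\<close>]]
      by (auto simp: abs_mult mult_ac)
  qed auto
  then show ?thesis unfolding l1_norm_def by (auto intro: bdd_aboveI2)
qed

lemma l1_norm_le_kothe_norm:
  "u \<in> kothe_dual X \<Longrightarrow> z \<in> X \<Longrightarrow> N z \<le> 1 \<Longrightarrow> l1_norm (\<lambda>i. u i * z i) \<le> kothe_norm X N u"
  unfolding kothe_norm_def mult_norm_def by (rule cSUP_upper[OF _ kothe_norm_bdd]) auto

lemma kothe_norm_nonneg: "u \<in> kothe_dual X \<Longrightarrow> 0 \<le> kothe_norm X N u"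
  using l1_norm_le_kothe_norm[of u "\<lambda>i. 0"] zero_mem norm_zero by (simp add: l1_norm_def)

lemma l1_norm_mult_le:
  assumes u: "u \<in> kothe_dual X" and z: "z \<in> X"
  shows "l1_norm (\<lambda>i. u i * z i) \<le> kothe_norm X N u * N z"
proof (cases "N z = 0")
  case True
  then show ?thesis using norm_eq_zero_iff[OF z] by (simp add: l1_norm_def)
next
  case False
  then have pos: "N z > 0" using norm_nonneg[OF z] by simp
  have "N (\<lambda>i. (1 / N z) * z i) \<le> 1" using norm_scale[OF z, of "1 / N z"] pos by simp
  then have "l1_norm (\<lambda>i. u i * ((1 / N z) * z i)) \<le> kothe_norm X N u"
    using l1_norm_le_kothe_norm[OF u scale_mem[OF z]] by blast
  moreover have "l1_norm (\<lambda>i. u i * ((1 / N z) * z i)) = l1_norm (\<lambda>i. u i * z i) / N z"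
    unfolding l1_norm_def using suminf_divide[OF kothe_dual_summable[OF u z], of "N z"] pos
    by (simp add: abs_mult)
  ultimately show ?thesis using pos by (simp add: divide_le_eq)
qed

lemma normalized_mem_kothe_ball:
  assumes u: "u \<in> kothe_dual X" and pos: "kothe_norm X N u > 0"
  shows "(\<lambda>i. u i / kothe_norm X N u) \<in> kothe_ball X N"
proof -
  let ?M = "kothe_norm X N u"
  have "(\<lambda>i. u i / ?M) \<in> kothe_dual X"
    using u unfolding kothe_dual_def mult_space_def l1_def
    by (auto simp: abs_mult intro: summable_divide)
  moreover have "l1_norm (\<lambda>i. u i / ?M * z i) \<le> N z" if z: "z \<in> X" for z
  proof -
    have "l1_norm (\<lambda>i. u i / ?M * z i) = l1_norm (\<lambda>i. u i * z i) / ?M"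
      unfolding l1_norm_def using suminf_divide[OF kothe_dual_summable[OF u z], of ?M] pos
      by (simp add: abs_mult)
    also have "\<dots> \<le> N z" using l1_norm_mult_le[OF u z] pos by (simp add: field_simps)
    finally show ?thesis .
  qed
  ultimately show ?thesis unfolding kothe_ball_def by simp
qed

lemma kothe_norm_eq_zero: "u \<in> kothe_dual X \<Longrightarrow> kothe_norm X N u = 0 \<Longrightarrow> u = (\<lambda>i. 0)"
  using l1_norm_mult_le[OF _ unitv_mem] l1_norm_mult_unitv by fastforce

end

lemma mem_mult_bidual_iff:
  "g \<in> mult_space Y (kothe_dual (kothe_dual Z)) \<longleftrightarrow>
     (\<forall>y\<in>Y. \<forall>u\<in>kothe_dual Z. summable (\<lambda>i. \<bar>g i * y i * u i\<bar>))"
  unfolding mult_space_def kothe_dual_def l1_def by simp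

lemma bounded_mem_mult_bidual:
  assumes "Y \<subseteq> kothe_dual (kothe_dual Z)" and bounded: "\<And>i. \<bar>g i\<bar> \<le> C"
  shows "g \<in> mult_space Y (kothe_dual (kothe_dual Z))"
  unfolding mem_mult_bidual_iff
proof (intro ballI)
  fix y u assume y: "y \<in> Y" and u: "u \<in> kothe_dual Z"
  have "summable (\<lambda>i. \<bar>y i * u i\<bar>)"
    using assms(1) y u unfolding kothe_dual_def mult_space_def l1_def by blast
  then show "summable (\<lambda>i. \<bar>g i * y i * u i\<bar>)"
    by (rule summable_comparison_test[OF _ summable_mult[of _ C], rotated])
      (use bounded in \<open>auto simp: abs_mult mult.assoc intro!: mult_right_mono\<close>)
qed

lemma bidual_multiplier_bound:
  assumes Y: "unit_seq_space Y NY" and Z: "unit_seq_space Z NZ"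
    and g: "g \<in> mult_space Y (kothe_dual (kothe_dual Z))"
  shows "\<exists>K>0. \<forall>y\<in>Y. \<forall>u\<in>kothe_dual Z.
           (\<Sum>i. \<bar>g i * y i * u i\<bar>) \<le> K * NY y * kothe_norm Z NZ u"
proof -
  interpret Y: unit_seq_space Y NY by (rule Y)
  interpret Z: unit_seq_space Z NZ by (rule Z)
  let ?M = "kothe_norm Z NZ"
  have sm: "summable (\<lambda>i. \<bar>g i * y i * u i\<bar>)" if "y \<in> Y" "u \<in> kothe_dual Z" for y u
    using g that unfolding mem_mult_bidual_iff by blast
  obtain K0 where K0: "\<And>y u. y \<in> Y \<Longrightarrow> NY y \<le> 1 \<Longrightarrow> u \<in> kothe_ball Z NZ \<Longrightarrow>
      (\<Sum>i. \<bar>g i * y i * u i\<bar>) \<le> K0"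
    using trilinear_sum_bounded[OF Y.halved_series_in_unit_ball Z.halved_series_in_kothe_ball, of g] sm
    unfolding kothe_ball_def by blast
  define K where "K = max K0 0 + 1"
  have "(\<Sum>i. \<bar>g i * y i * u i\<bar>) \<le> K * NY y * ?M u" if y: "y \<in> Y" and u: "u \<in> kothe_dual Z" for y u
  proof (cases "NY y = 0 \<or> ?M u = 0")
    case True
    then have "y = (\<lambda>i. 0) \<or> u = (\<lambda>i. 0)"
      using Y.norm_eq_zero_iff[OF y] Z.kothe_norm_eq_zero[OF u] by blast
    then show ?thesis using True by auto
  next
    case False
    then have p: "NY y > 0" and q: "?M u > 0"
      using Y.norm_nonneg[OF y] Z.kothe_norm_nonneg[OF u] by auto
    let ?y = "\<lambda>i. (1 / NY y) * y i"
    have "NY ?y \<le> 1" using Y.norm_scale[OF y, of "1 / NY y"] p by simp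
    then have "(\<Sum>i. \<bar>g i * ?y i * (u i / ?M u)\<bar>) \<le> K0"
      using K0 Y.scale_mem[OF y] Z.normalized_mem_kothe_ball[OF u q] by blast
    moreover have "(\<Sum>i. \<bar>g i * ?y i * (u i / ?M u)\<bar>) = (\<Sum>i. \<bar>g i * y i * u i\<bar>) / (NY y * ?M u)"
      using suminf_divide[OF sm[OF y u], of "NY y * ?M u"] p q by (simp add: abs_mult)
    ultimately have "(\<Sum>i. \<bar>g i * y i * u i\<bar>) \<le> K0 * (NY y * ?M u)"
      using p q by (simp add: divide_le_eq)
    also have "\<dots> \<le> K * (NY y * ?M u)"
      using p q by (intro mult_right_mono) (auto simp: K_def)
    finally show ?thesis by (simp add: mult.assoc)
  qed
  moreover have "K > 0" by (simp add: K_def)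
  ultimately show ?thesis by blast
qed

definition pi_costs :: "(nat \<Rightarrow> real) set \<Rightarrow> ((nat \<Rightarrow> real) \<Rightarrow> real) \<Rightarrow>
    (nat \<Rightarrow> real) set \<Rightarrow> ((nat \<Rightarrow> real) \<Rightarrow> real) \<Rightarrow> (nat \<Rightarrow> real) \<Rightarrow> real set" where
  "pi_costs X N Y M h = {(\<Sum>n. N (f n) * M (g n)) | f g.
      (\<forall>n. f n \<in> X \<and> g n \<in> Y) \<and> summable (\<lambda>n. N (f n) * M (g n)) \<and>
      (\<forall>i. summable (\<lambda>n. \<bar>f n i * g n i\<bar>) \<and> \<bar>h i\<bar> \<le> (\<Sum>n. \<bar>f n i * g n i\<bar>))}"

lemma pi_norm_eq_Inf: "pi_norm X N Y M h = Inf (pi_costs X N Y M h)"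
  unfolding pi_norm_def pi_costs_def ..

lemma sum_abs_mult_le_pi_cost:
  fixes g :: "nat \<Rightarrow> real"
  assumes fin: "finite F" and cost: "s \<in> pi_costs X N Y M w"
    and bound: "\<And>f u. f \<in> X \<Longrightarrow> u \<in> Y \<Longrightarrow>
                  summable (\<lambda>i. \<bar>g i * f i * u i\<bar>) \<and> (\<Sum>i. \<bar>g i * f i * u i\<bar>) \<le> K * N f * M u"
  shows "(\<Sum>i\<in>F. \<bar>g i * w i\<bar>) \<le> K * s"
proof -
  obtain f U where fU: "\<forall>k. f k \<in> X \<and> U k \<in> Y" and sm: "summable (\<lambda>k. N (f k) * M (U k))"
    and cover: "\<And>i. summable (\<lambda>k. \<bar>f k i * U k i\<bar>) \<and> \<bar>w i\<bar> \<le> (\<Sum>k. \<bar>f k i * U k i\<bar>)"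
    and s: "s = (\<Sum>k. N (f k) * M (U k))"
    using cost unfolding pi_costs_def by blast
  have smi: "summable (\<lambda>k. \<bar>g i * f k i * U k i\<bar>)" for i
    using summable_mult[OF conjunct1[OF cover[of i]], of "\<bar>g i\<bar>"] by (simp add: abs_mult mult.assoc)
  have "(\<Sum>i\<in>F. \<bar>g i * w i\<bar>) \<le> (\<Sum>i\<in>F. \<bar>g i\<bar> * (\<Sum>k. \<bar>f k i * U k i\<bar>))"
    by (rule sum_mono) (use cover in \<open>auto simp: abs_mult intro: mult_left_mono\<close>)
  also have "\<dots> = (\<Sum>i\<in>F. \<Sum>k. \<bar>g i * f k i * U k i\<bar>)"
    using suminf_mult[OF conjunct1[OF cover]] by (simp add: abs_mult mult.assoc)
  also have "\<dots> = (\<Sum>k. \<Sum>i\<in>F. \<bar>g i * f k i * U k i\<bar>)"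
    by (rule suminf_sum[symmetric]) (rule smi)
  also have "\<dots> \<le> (\<Sum>k. K * (N (f k) * M (U k)))"
  proof (rule suminf_le)
    show "summable (\<lambda>k. \<Sum>i\<in>F. \<bar>g i * f k i * U k i\<bar>)" by (rule summable_sum) (rule smi)
    show "summable (\<lambda>k. K * (N (f k) * M (U k)))" by (rule summable_mult[OF sm])
    fix k
    have "(\<Sum>i\<in>F. \<bar>g i * f k i * U k i\<bar>) \<le> (\<Sum>i. \<bar>g i * f k i * U k i\<bar>)"
      using bound[of "f k" "U k"] fU by (intro sum_le_suminf fin) auto
    also have "\<dots> \<le> K * N (f k) * M (U k)" using bound fU by blast
    finally show "(\<Sum>i\<in>F. \<bar>g i * f k i * U k i\<bar>) \<le> K * (N (f k) * M (U k))"
      by (simp add: mult.assoc)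
  qed
  also have "\<dots> = K * s" unfolding s by (rule suminf_mult[OF sm])
  finally show ?thesis .
qed

lemma sum_abs_mult_le_pi_norm:
  fixes g :: "nat \<Rightarrow> real"
  assumes K: "K > 0" and fin: "finite F" and ne: "pi_costs X N Y M w \<noteq> {}"
    and bound: "\<And>f u. f \<in> X \<Longrightarrow> u \<in> Y \<Longrightarrow>
                  summable (\<lambda>i. \<bar>g i * f i * u i\<bar>) \<and> (\<Sum>i. \<bar>g i * f i * u i\<bar>) \<le> K * N f * M u"
  shows "(\<Sum>i\<in>F. \<bar>g i * w i\<bar>) \<le> K * pi_norm X N Y M w"
proof -
  have "(\<Sum>i\<in>F. \<bar>g i * w i\<bar>) / K \<le> pi_norm X N Y M w"
    unfolding pi_norm_eq_Inf
  proof (rule cInf_greatest[OF ne])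
    fix s assume s: "s \<in> pi_costs X N Y M w"
    have "(\<Sum>i\<in>F. \<bar>g i * w i\<bar>) \<le> K * s"
      using fin s bound by (rule sum_abs_mult_le_pi_cost)
    then show "(\<Sum>i\<in>F. \<bar>g i * w i\<bar>) / K \<le> s"
      using K by (simp add: divide_le_eq mult.commute)
  qed
  then show ?thesis using K by (simp add: divide_le_eq mult.commute)
qed

lemma (in seq_space) rank_one_mem_pi_costs:
  assumes M_nonneg: "\<And>u. u \<in> Y \<Longrightarrow> 0 \<le> M u" and zero: "(\<lambda>i. 0) \<in> Y"
    and f: "f \<in> X" and u: "u \<in> Y" and w: "\<And>i. \<bar>w i\<bar> \<le> \<bar>f i * u i\<bar>"
  shows "N f * M u \<in> pi_costs X N Y M w"
proof -
  define F where "F n = (if n = 0 then f else (\<lambda>i. 0))" for n :: nat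
  define U where "U n = (if n = 0 then u else (\<lambda>i. 0))" for n :: nat
  have FU: "\<forall>n. F n \<in> X \<and> U n \<in> Y" unfolding F_def U_def using f u zero_mem zero by auto
  have "(\<lambda>n. N (F n) * M (U n)) = (\<lambda>n. if n = 0 then N f * M u else 0)"
    unfolding F_def U_def using norm_zero by auto
  then have cost: "(\<lambda>n. N (F n) * M (U n)) sums (N f * M u)"
    using sums_single[of 0 "\<lambda>_. N f * M u"] by simp
  have "(\<lambda>n. \<bar>F n i * U n i\<bar>) = (\<lambda>n. if n = 0 then \<bar>f i * u i\<bar> else 0)" for i
    unfolding F_def U_def by auto
  then have cover: "(\<lambda>n. \<bar>F n i * U n i\<bar>) sums \<bar>f i * u i\<bar>" for i
    using sums_single[of 0 "\<lambda>_. \<bar>f i * u i\<bar>"] by simp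
  have "N f * M u = (\<Sum>n. N (F n) * M (U n))" using sums_unique[OF cost] .
  moreover have "\<forall>i. summable (\<lambda>n. \<bar>F n i * U n i\<bar>) \<and> \<bar>w i\<bar> \<le> (\<Sum>n. \<bar>F n i * U n i\<bar>)"
    using cover w sums_unique sums_summable by metis
  ultimately show ?thesis unfolding pi_costs_def using FU cost sums_summable by blast
qed

lemma (in seq_space) pi_norm_le_rank_one:
  assumes M_nonneg: "\<And>u. u \<in> Y \<Longrightarrow> 0 \<le> M u" and zero: "(\<lambda>i. 0) \<in> Y"
    and f: "f \<in> X" and u: "u \<in> Y" and w: "\<And>i. \<bar>w i\<bar> \<le> \<bar>f i * u i\<bar>"
  shows "pi_norm X N Y M w \<le> N f * M u"
proof -
  have "0 \<le> s" if cost: "s \<in> pi_costs X N Y M w" for s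
  proof -
    obtain F U where FU: "\<forall>n. F n \<in> X \<and> U n \<in> Y" and sm: "summable (\<lambda>n. N (F n) * M (U n))"
      and s: "s = (\<Sum>n. N (F n) * M (U n))"
      using cost unfolding pi_costs_def by blast
    show ?thesis
      unfolding s using FU norm_nonneg M_nonneg by (intro suminf_nonneg[OF sm] mult_nonneg_nonneg) auto
  qed
  then have "bdd_below (pi_costs X N Y M w)" by (rule bdd_belowI)
  moreover have "N f * M u \<in> pi_costs X N Y M w"
    using M_nonneg zero f u w by (rule rank_one_mem_pi_costs)
  ultimately show ?thesis
    unfolding pi_norm_eq_Inf by (simp add: cInf_lower)
qed

lemma sum_delta_mult:
  fixes m p :: nat and f :: "nat \<Rightarrow> real"
  shows "(\<Sum>j<m. (if j = p then x else 0) * f j) = (if p < m then x * f p else 0)"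
  by (induction m) (auto simp: less_Suc_eq)

lemma abs_le_of_signed_sum_bound:
  fixes a c :: "nat \<Rightarrow> real"
  assumes H: "\<And>m r. \<forall>j. \<bar>r j\<bar> \<le> 1 \<Longrightarrow> (\<Sum>j<m. r j * a j) \<le> D * \<bar>\<Sum>j<m. r j * c j\<bar>"
  shows "\<bar>a p\<bar> \<le> D * \<bar>c p\<bar>"
proof -
  define \<sigma> where "\<sigma> = (if a p \<ge> 0 then 1 else -1::real)"
  have "(\<Sum>j<Suc p. (if j = p then \<sigma> else 0) * a j) \<le> D * \<bar>\<Sum>j<Suc p. (if j = p then \<sigma> else 0) * c j\<bar>"
    by (rule H) (simp add: \<sigma>_def)
  then show ?thesis by (simp add: sum_delta_mult \<sigma>_def abs_mult split: if_splits)
qed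

lemma cross_products_eq_of_signed_sum_bound:
  fixes a c :: "nat \<Rightarrow> real"
  assumes H: "\<And>m r. \<forall>j. \<bar>r j\<bar> \<le> 1 \<Longrightarrow> (\<Sum>j<m. r j * a j) \<le> D * \<bar>\<Sum>j<m. r j * c j\<bar>"
  shows "c q * a p = c p * a q"
proof (cases "p = q \<or> (c p = 0 \<and> c q = 0)")
  case True
  then show ?thesis by auto
next
  case False
  then have "p \<noteq> q" and "\<bar>c p\<bar> + \<bar>c q\<bar> > 0" by auto
  define s where "s = 1 / (\<bar>c p\<bar> + \<bar>c q\<bar>)"
  have s: "s > 0" "\<bar>s * c p\<bar> \<le> 1" "\<bar>s * c q\<bar> \<le> 1"
    using \<open>\<bar>c p\<bar> + \<bar>c q\<bar> > 0\<close> by (auto simp: s_def abs_mult field_simps)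
  define m where "m = Suc (max p q)"
  have "p < m" "q < m" unfolding m_def by auto
  \<comment> \<open>The test vector \<open>t s (c q e_p - c p e_q)\<close> annihilates \<open>c\<close>.\<close>
  have "t * s * (c q * a p - c p * a q) \<le> 0" if t: "\<bar>t\<bar> = 1" for t
  proof -
    let ?r = "\<lambda>j. (if j = p then t * s * c q else 0) + (if j = q then - (t * s * c p) else 0)"
    have "(\<Sum>j<m. ?r j * a j) \<le> D * \<bar>\<Sum>j<m. ?r j * c j\<bar>"
      by (rule H) (use s t \<open>p \<noteq> q\<close> in \<open>auto simp: abs_mult\<close>)
    moreover have eval: "(\<Sum>j<m. ?r j * f j) = t * s * c q * f p - t * s * c p * f q" for f :: "nat \<Rightarrow> real"
      using \<open>p < m\<close> \<open>q < m\<close> by (simp only: distrib_right sum.distrib sum_delta_mult) simp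
    moreover have "t * s * c q * c p - t * s * c p * c q = 0" by simp
    ultimately show ?thesis by (simp only: eval[of a] eval[of c]) (simp add: algebra_simps)
  qed
  from this[of 1] this[of "-1"] have "s * (c q * a p - c p * a q) = 0" by simp
  then show ?thesis using s by simp
qed

lemma proportional_of_signed_sum_bound:
  fixes a c :: "nat \<Rightarrow> real"
  assumes D: "0 \<le> D"
    and H: "\<And>m r. \<forall>j. \<bar>r j\<bar> \<le> 1 \<Longrightarrow> (\<Sum>j<m. r j * a j) \<le> D * \<bar>\<Sum>j<m. r j * c j\<bar>"
  shows "\<exists>\<gamma>. \<bar>\<gamma>\<bar> \<le> D \<and> (\<forall>j. a j = \<gamma> * c j) \<and> ((\<forall>j. c j = 0) \<longrightarrow> \<gamma> = 0)"
proof (cases "\<forall>j. c j = 0")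
  case True
  then show ?thesis using abs_le_of_signed_sum_bound[OF H] D by auto
next
  case False
  then obtain p where p: "c p \<noteq> 0" by blast
  define \<gamma> where "\<gamma> = a p / c p"
  have "a j = \<gamma> * c j" for j
    using cross_products_eq_of_signed_sum_bound[OF H, of p j] p by (simp add: \<gamma>_def field_simps)
  moreover have "\<bar>\<gamma>\<bar> \<le> D"
    using abs_le_of_signed_sum_bound[OF H, of p] p by (simp add: \<gamma>_def abs_divide divide_le_eq)
  ultimately show ?thesis using False by blast
qed

lemma bounded_matrix_realizes_row_values:
  fixes c :: "nat \<Rightarrow> nat \<Rightarrow> real" and v :: "nat \<Rightarrow> real"
  assumes rows: "\<And>i. i < n \<Longrightarrow> v i \<noteq> 0 \<Longrightarrow> \<exists>j. c i j \<noteq> 0"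
  shows "\<exists>t>0. \<exists>m R. (\<forall>i j. \<bar>R i j\<bar> \<le> 1) \<and> (\<forall>i<n. (\<Sum>j<m. R i j * c i j) = t * v i)"
proof -
  define J where "J i = (SOME j. c i j \<noteq> 0)" for i
  have J: "c i (J i) \<noteq> 0" if "i < n" "v i \<noteq> 0" for i
    unfolding J_def using someI_ex[OF rows[OF that]] .
  define \<rho> where "\<rho> i = (if v i = 0 then 0 else v i / c i (J i))" for i
  define t where "t = 1 / (1 + (\<Sum>i<n. \<bar>\<rho> i\<bar>))"
  define R where "R i j = (if i < n \<and> j = J i then t * \<rho> i else 0)" for i j
  define m where "m = Suc (\<Sum>i<n. J i)"
  have t: "t > 0" unfolding t_def by (simp add: add_pos_nonneg sum_nonneg)
  have "\<bar>R i j\<bar> \<le> 1" for i j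
  proof (cases "i < n")
    case True
    then have "\<bar>\<rho> i\<bar> \<le> (\<Sum>i<n. \<bar>\<rho> i\<bar>)" by (intro member_le_sum) auto
    then show ?thesis using t by (simp add: R_def t_def abs_mult)
  qed (simp add: R_def)
  moreover have "(\<Sum>j<m. R i j * c i j) = t * v i" if i: "i < n" for i
  proof -
    have "J i < m" unfolding m_def using member_le_sum[of i "{..<n}" J] i by simp
    then have "(\<Sum>j<m. R i j * c i j) = t * \<rho> i * c i (J i)"
      using i sum_delta_mult[where m=m and p="J i" and x="t * \<rho> i" and f="c i"] by (simp add: R_def)
    then show ?thesis using J[OF i] by (simp add: \<rho>_def)
  qed
  ultimately show ?thesis using t by blast
qed

locale seq_operator = X: seq_space X N + Y: seq_space Y M
  for X N Y M +
  fixes T :: "(nat \<Rightarrow> real) \<Rightarrow> (nat \<Rightarrow> real)"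
  assumes bounded_linear: "bounded_linear_op X N Y M T"
begin

lemma maps_into: "x \<in> X \<Longrightarrow> T x \<in> Y"
  using bounded_linear unfolding bounded_linear_op_def by blast

lemma additive: "x \<in> X \<Longrightarrow> y \<in> X \<Longrightarrow> T (\<lambda>i. x i + y i) = (\<lambda>i. T x i + T y i)"
  using bounded_linear unfolding bounded_linear_op_def by blast

lemma homogeneous: "x \<in> X \<Longrightarrow> T (\<lambda>i. c * x i) = (\<lambda>i. c * T x i)"
  using bounded_linear unfolding bounded_linear_op_def by blast

lemma bounded: "\<exists>K. \<forall>x\<in>X. M (T x) \<le> K * N x"
  using bounded_linear unfolding bounded_linear_op_def by blast

lemma map_zero: "T (\<lambda>i. 0) = (\<lambda>i. 0)"
  using homogeneous[OF X.zero_mem, of 0] by simp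

lemma map_diff:
  assumes x: "x \<in> X" and y: "y \<in> X"
  shows "T (\<lambda>i. x i - y i) = (\<lambda>i. T x i - T y i)"
proof -
  have "T (\<lambda>i. x i + (-1) * y i) = (\<lambda>i. T x i + T (\<lambda>i. (-1) * y i) i)"
    by (rule additive[OF x X.scale_mem[OF y]])
  then show ?thesis using homogeneous[OF y, of "-1"] by simp
qed

lemma coord_tendsto:
  assumes x: "x \<in> X" and s: "\<And>n. s n \<in> X" and lim: "(\<lambda>n. N (\<lambda>i. x i - s n i)) \<longlonglongrightarrow> 0"
    and u: "unitv k \<in> Y"
  shows "(\<lambda>n. T (s n) k) \<longlonglongrightarrow> T x k"
proof -
  obtain K where K: "\<And>z. z \<in> X \<Longrightarrow> M (T z) \<le> K * N z" using bounded by blast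
  have eq: "M (\<lambda>i. T (s n) i - T x i) = M (T (\<lambda>i. x i - s n i))" for n
    using Y.norm_diff_commute[OF maps_into[OF s] maps_into[OF x]] map_diff[OF x s] by simp
  have "(\<lambda>n. M (\<lambda>i. T (s n) i - T x i)) \<longlonglongrightarrow> 0"
  proof (rule Lim_null_comparison)
    show "\<forall>\<^sub>F n in sequentially. norm (M (\<lambda>i. T (s n) i - T x i)) \<le> K * N (\<lambda>i. x i - s n i)"
      using eq K X.diff_mem[OF x s] Y.norm_nonneg[OF Y.diff_mem[OF maps_into[OF s] maps_into[OF x]]]
      by (intro always_eventually) auto
    show "(\<lambda>n. K * N (\<lambda>i. x i - s n i)) \<longlonglongrightarrow> 0"
      using tendsto_mult_right_zero[OF lim] by simp
  qed
  then show ?thesis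
    using Y.coord_tendsto[where s="\<lambda>n. T (s n)", OF maps_into[OF s] maps_into[OF x] u] by blast
qed

lemma matrix_series_tendsto:
  assumes basis: "unit_vectors_schauder_basis X N" and u: "unitv k \<in> Y" and x: "x \<in> X"
  shows "(\<lambda>n. \<Sum>j<n. x j * T (unitv j) k) \<longlonglongrightarrow> T x k"
proof -
  have unit: "unitv j \<in> X" for j using basis unfolding unit_vectors_schauder_basis_def by blast
  define P where "P n = (\<lambda>i. \<Sum>j<n. x j * unitv j i)" for n
  have P_mem: "P n \<in> X" for n
    unfolding P_def using X.sum_mem_norm_le[of "{..<n}" "\<lambda>j i. x j * unitv j i"] X.scale_mem[OF unit] by auto
  have TP: "T (P n) k = (\<Sum>j<n. x j * T (unitv j) k)" for n
  proof (induction n)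
    case 0
    then show ?case using map_zero by (simp add: P_def)
  next
    case (Suc n)
    have "P (Suc n) = (\<lambda>i. P n i + x n * unitv n i)" by (simp add: P_def)
    then show ?case
      using Suc additive[OF P_mem X.scale_mem[OF unit]] homogeneous[OF unit] by simp
  qed
  have "(\<lambda>i. x i - P n i) = (\<lambda>i. if i < n then 0 else x i)" for n
  proof
    show "x i - P n i = (if i < n then 0 else x i)" for i
      by (induction n) (auto simp: P_def unitv_def less_Suc_eq)
  qed
  then have "(\<lambda>n. N (\<lambda>i. x i - P n i)) \<longlonglongrightarrow> 0"
    using basis x unfolding unit_vectors_schauder_basis_def by simp
  then show ?thesis using coord_tendsto[OF x P_mem _ u] TP by simp
qed

end

locale diagonal_factorization =
  T: seq_operator X1 NX1 Y1 NY1 T + S: seq_operator X2 NX2 Y2 NY2 S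
  for X1 NX1 Y1 NY1 T X2 NX2 Y2 NY2 S +
  fixes h :: "nat \<Rightarrow> real"
  assumes basis_X1: "unit_vectors_schauder_basis X1 NX1"
    and basis_X2: "unit_vectors_schauder_basis X2 NX2"
    and unitv_Y1: "unitv k \<in> Y1"
    and unitv_Y2: "unitv k \<in> Y2"
    and h: "h \<in> mult_space X1 X2"
begin

sublocale Y1: unit_seq_space Y1 NY1
  by unfold_locales (rule unitv_Y1)

sublocale Y2: unit_seq_space Y2 NY2
  by unfold_locales (rule unitv_Y2)

abbreviation pi_test_bound :: "real \<Rightarrow> bool" where
  "pi_test_bound C \<equiv> \<forall>n m. \<forall>r :: nat \<Rightarrow> nat \<Rightarrow> real. (\<forall>i j. \<bar>r i j\<bar> \<le> 1) \<longrightarrow>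
     (\<Sum>i<n. \<Sum>j<m. r i j * T (unitv j) i)
       \<le> C * pi_norm Y2 NY2 (kothe_dual Y1) (kothe_norm Y1 NY1)
             (\<lambda>i. if i < n then (\<Sum>j<m. h j * r i j * S (unitv j) i) else 0)"

abbreviation row_test_bound :: "real \<Rightarrow> bool" where
  "row_test_bound C \<equiv> \<forall>n m. \<forall>r :: nat \<Rightarrow> real. (\<forall>j. \<bar>r j\<bar> \<le> 1) \<longrightarrow>
     (\<Sum>j<m. r j * T (unitv j) n) \<le> C * \<bar>\<Sum>j<m. h j * r j * S (unitv j) n\<bar>"

lemma unitv_X1: "unitv k \<in> X1"
  using basis_X1 unfolding unit_vectors_schauder_basis_def by blast

lemma unitv_X2: "unitv k \<in> X2"
  using basis_X2 unfolding unit_vectors_schauder_basis_def by blast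

lemma mult_h_mem: "x \<in> X1 \<Longrightarrow> (\<lambda>i. h i * x i) \<in> X2"
  using h unfolding mult_space_def by blast

lemma factors_iff_matrix_factors:
  "(\<forall>x\<in>X1. T x = (\<lambda>i. g i * S (\<lambda>j. h j * x j) i)) \<longleftrightarrow>
   (\<forall>i j. T (unitv j) i = g i * h j * S (unitv j) i)"
proof
  assume fac: "\<forall>x\<in>X1. T x = (\<lambda>i. g i * S (\<lambda>j. h j * x j) i)"
  show "\<forall>i j. T (unitv j) i = g i * h j * S (unitv j) i"
  proof (intro allI)
    fix i j
    have "(\<lambda>l. h l * unitv j l) = (\<lambda>l. h j * unitv j l)" by (auto simp: unitv_def)
    then have "S (\<lambda>l. h l * unitv j l) = (\<lambda>l. h j * S (unitv j) l)"
      using S.homogeneous[OF unitv_X2] by simp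
    then show "T (unitv j) i = g i * h j * S (unitv j) i" using fac unitv_X1[of j] by simp
  qed
next
  assume fac: "\<forall>i j. T (unitv j) i = g i * h j * S (unitv j) i"
  show "\<forall>x\<in>X1. T x = (\<lambda>i. g i * S (\<lambda>j. h j * x j) i)"
  proof (intro ballI ext)
    fix x i assume x: "x \<in> X1"
    have "(\<lambda>n. \<Sum>j<n. h j * x j * S (unitv j) i) \<longlonglongrightarrow> S (\<lambda>j. h j * x j) i"
      by (rule S.matrix_series_tendsto[OF basis_X2 unitv_Y2 mult_h_mem[OF x]])
    then have "(\<lambda>n. g i * (\<Sum>j<n. h j * x j * S (unitv j) i)) \<longlonglongrightarrow> g i * S (\<lambda>j. h j * x j) i"
      by (rule tendsto_mult_left)
    then have "(\<lambda>n. \<Sum>j<n. x j * T (unitv j) i) \<longlonglongrightarrow> g i * S (\<lambda>j. h j * x j) i"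
      by (simp add: fac sum_distrib_left mult_ac)
    then show "T x i = g i * S (\<lambda>j. h j * x j) i"
      using T.matrix_series_tendsto[OF basis_X1 unitv_Y1 x] LIMSEQ_unique by blast
  qed
qed

end

context diagonal_factorization
begin

lemma matrix_factors_imp_pi_bound:
  assumes g: "g \<in> mult_space Y2 (kothe_dual (kothe_dual Y1))"
    and fac: "\<And>i j. T (unitv j) i = g i * h j * S (unitv j) i"
  shows "\<exists>C>0. pi_test_bound C"
proof -
  obtain K where K: "K > 0" and bound: "\<And>y u. y \<in> Y2 \<Longrightarrow> u \<in> kothe_dual Y1 \<Longrightarrow>
      (\<Sum>i. \<bar>g i * y i * u i\<bar>) \<le> K * NY2 y * kothe_norm Y1 NY1 u"
    using bidual_multiplier_bound[OF Y2.unit_seq_space_axioms Y1.unit_seq_space_axioms g] by blast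
  have "(\<Sum>i<n. \<Sum>j<m. r i j * T (unitv j) i)
          \<le> K * pi_norm Y2 NY2 (kothe_dual Y1) (kothe_norm Y1 NY1) w"
    if w: "w = (\<lambda>i. if i < n then (\<Sum>j<m. h j * r i j * S (unitv j) i) else 0)" for n m r w
  proof -
    have "w \<in> Y2" unfolding w by (rule Y2.truncation_mem)
    moreover have "(\<lambda>i. if i < n then 1 else 0) \<in> kothe_dual Y1"
      by (rule finite_support_mem_kothe_dual[of n]) simp
    moreover have "\<bar>w i\<bar> \<le> \<bar>w i * (if i < n then 1 else 0)\<bar>" for i by (simp add: w)
    ultimately have ne: "pi_costs Y2 NY2 (kothe_dual Y1) (kothe_norm Y1 NY1) w \<noteq> {}"
      using S.Y.rank_one_mem_pi_costs[where M="kothe_norm Y1 NY1", OF Y1.kothe_norm_nonneg zero_mem_kothe_dual]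
      by blast
    have "(\<Sum>i<n. \<Sum>j<m. r i j * T (unitv j) i) = (\<Sum>i<n. g i * w i)"
      by (simp add: w fac sum_distrib_left mult_ac)
    also have "\<dots> \<le> (\<Sum>i<n. \<bar>g i * w i\<bar>)" by (rule sum_mono) simp
    also have "\<dots> \<le> K * pi_norm Y2 NY2 (kothe_dual Y1) (kothe_norm Y1 NY1) w"
      using g bound unfolding mem_mult_bidual_iff by (intro sum_abs_mult_le_pi_norm[OF K _ ne]) auto
    finally show ?thesis .
  qed
  then show ?thesis using K by blast
qed

end

context diagonal_factorization
begin

lemma pi_bound_imp_row_bound:
  assumes C: "C > 0" and HC: "pi_test_bound C" and r: "\<forall>j. \<bar>r j\<bar> \<le> 1"
  shows "(\<Sum>j<m. r j * T (unitv j) i)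
           \<le> C * NY2 (unitv i) * kothe_norm Y1 NY1 (unitv i) * \<bar>\<Sum>j<m. r j * (h j * S (unitv j) i)\<bar>"
proof -
  define R where "R i' j = (if i' = i then r j else 0)" for i' j
  define v where "v = (\<Sum>j<m. r j * (h j * S (unitv j) i))"
  let ?w = "\<lambda>i'. if i' < Suc i then (\<Sum>j<m. h j * R i' j * S (unitv j) i') else 0"
  have R: "\<forall>i' j. \<bar>R i' j\<bar> \<le> 1" using r by (simp add: R_def)
  have pi_le: "pi_norm Y2 NY2 (kothe_dual Y1) (kothe_norm Y1 NY1) ?w
                 \<le> NY2 (\<lambda>l. v * unitv i l) * kothe_norm Y1 NY1 (unitv i)"
    by (rule S.Y.pi_norm_le_rank_one[OF Y1.kothe_norm_nonneg zero_mem_kothe_dual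
          S.Y.scale_mem[OF unitv_Y2] unitv_mem_kothe_dual])
      (auto simp: R_def unitv_def v_def mult_ac)
  have "(\<Sum>j<m. r j * T (unitv j) i) = (\<Sum>i'<Suc i. \<Sum>j<m. R i' j * T (unitv j) i')"
    by (simp add: R_def)
  also have "\<dots> \<le> C * pi_norm Y2 NY2 (kothe_dual Y1) (kothe_norm Y1 NY1) ?w"
    using HC R by blast
  also have "\<dots> \<le> C * (NY2 (\<lambda>l. v * unitv i l) * kothe_norm Y1 NY1 (unitv i))"
    using pi_le C by (simp add: mult_left_mono)
  also have "\<dots> = C * NY2 (unitv i) * kothe_norm Y1 NY1 (unitv i) * \<bar>v\<bar>"
    using S.Y.norm_scale[OF unitv_Y2] by (simp add: mult_ac)
  finally show ?thesis by (simp add: v_def)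
qed

lemma pi_bound_at_realized_rows:
  assumes C: "C > 0" and HC: "pi_test_bound C"
    and fac: "\<And>i j. T (unitv j) i = g i * (h j * S (unitv j) i)"
    and t: "t > 0" and R: "\<forall>i j. \<bar>R i j\<bar> \<le> 1"
    and realize: "\<And>i. i < n \<Longrightarrow> (\<Sum>j<m. R i j * (h j * S (unitv j) i)) = t * v i"
    and y: "y \<in> Y2" and u: "u \<in> kothe_dual Y1" and v: "\<And>i. \<bar>v i\<bar> \<le> \<bar>y i * u i\<bar>"
  shows "(\<Sum>i<n. g i * v i) \<le> C * NY2 y * kothe_norm Y1 NY1 u"
proof -
  define w where "w i = (if i < n then (\<Sum>j<m. h j * R i j * S (unitv j) i) else 0)" for i
  have "(\<Sum>j<m. R i j * T (unitv j) i) = t * (g i * v i)" if "i < n" for i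
  proof -
    have "(\<Sum>j<m. R i j * T (unitv j) i) = g i * (\<Sum>j<m. R i j * (h j * S (unitv j) i))"
      by (simp add: fac sum_distrib_left mult_ac)
    then show ?thesis using realize[OF that] by simp
  qed
  then have "t * (\<Sum>i<n. g i * v i) = (\<Sum>i<n. \<Sum>j<m. R i j * T (unitv j) i)"
    by (simp add: sum_distrib_left)
  also have "\<dots> \<le> C * pi_norm Y2 NY2 (kothe_dual Y1) (kothe_norm Y1 NY1) w"
    using HC R unfolding w_def by blast
  also have "\<dots> \<le> C * (NY2 (\<lambda>i. t * y i) * kothe_norm Y1 NY1 u)"
  proof (intro mult_left_mono less_imp_le[OF C]
      S.Y.pi_norm_le_rank_one[OF Y1.kothe_norm_nonneg zero_mem_kothe_dual S.Y.scale_mem[OF y] u])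
    fix i
    have "w i = (if i < n then t * v i else 0)"
      using realize by (simp add: w_def mult_ac)
    then show "\<bar>w i\<bar> \<le> \<bar>t * y i * u i\<bar>"
      using t v[of i] by (auto simp: abs_mult mult_left_mono)
  qed
  also have "\<dots> = t * (C * NY2 y * kothe_norm Y1 NY1 u)"
    using S.Y.norm_scale[OF y, of t] t by (simp add: mult_ac)
  finally show ?thesis using t by simp
qed

lemma pi_bound_imp_mult_bidual:
  assumes C: "C > 0" and HC: "pi_test_bound C"
    and fac: "\<And>i j. T (unitv j) i = g i * (h j * S (unitv j) i)"
    and support: "\<And>i. g i \<noteq> 0 \<Longrightarrow> \<exists>j. h j * S (unitv j) i \<noteq> 0"
  shows "g \<in> mult_space Y2 (kothe_dual (kothe_dual Y1))"
  unfolding mem_mult_bidual_iff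
proof (intro ballI summableI_nonneg_bounded)
  fix y u n assume y: "y \<in> Y2" and u: "u \<in> kothe_dual Y1"
  define v where "v i = (if g i = 0 then 0 else sgn (g i) * \<bar>y i * u i\<bar>)" for i
  have "\<exists>t>0. \<exists>m R. (\<forall>i j. \<bar>R i j\<bar> \<le> 1) \<and>
          (\<forall>i<n. (\<Sum>j<m. R i j * (h j * S (unitv j) i)) = t * v i)"
    by (rule bounded_matrix_realizes_row_values) (use support in \<open>auto simp: v_def split: if_splits\<close>)
  then obtain t m R where t: "t > 0" and R: "\<forall>i j. \<bar>R i j\<bar> \<le> 1"
    and realize: "\<And>i. i < n \<Longrightarrow> (\<Sum>j<m. R i j * (h j * S (unitv j) i)) = t * v i"
    by blast
  have "\<bar>v i\<bar> \<le> \<bar>y i * u i\<bar>" for i by (simp add: v_def abs_mult abs_sgn_eq)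
  then have "(\<Sum>i<n. g i * v i) \<le> C * NY2 y * kothe_norm Y1 NY1 u"
    using pi_bound_at_realized_rows[OF C HC fac t R realize y u] by blast
  moreover have "g i * v i = \<bar>g i * y i * u i\<bar>" for i
  proof -
    have "g i * v i = (g i * sgn (g i)) * \<bar>y i * u i\<bar>" by (simp add: v_def)
    then show ?thesis by (simp add: abs_sgn[symmetric] abs_mult)
  qed
  ultimately show "(\<Sum>i<n. \<bar>g i * y i * u i\<bar>) \<le> C * NY2 y * kothe_norm Y1 NY1 u"
    by simp
qed simp

lemma pi_bound_imp_matrix_factors:
  assumes C: "C > 0" and HC: "pi_test_bound C"
  shows "\<exists>g\<in>mult_space Y2 (kothe_dual (kothe_dual Y1)). \<forall>i j. T (unitv j) i = g i * h j * S (unitv j) i"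
proof -
  have "\<exists>\<gamma>. (\<forall>j. T (unitv j) i = \<gamma> * (h j * S (unitv j) i)) \<and>
            ((\<forall>j. h j * S (unitv j) i = 0) \<longrightarrow> \<gamma> = 0)" for i
  proof -
    have "0 \<le> C * NY2 (unitv i) * kothe_norm Y1 NY1 (unitv i)"
      using C S.Y.norm_nonneg[OF unitv_Y2] Y1.kothe_norm_nonneg[OF unitv_mem_kothe_dual] by simp
    then show ?thesis
      using proportional_of_signed_sum_bound[OF _ pi_bound_imp_row_bound[OF C HC]] by blast
  qed
  then obtain g where fac: "\<And>i j. T (unitv j) i = g i * (h j * S (unitv j) i)"
    and support: "\<And>i. (\<forall>j. h j * S (unitv j) i = 0) \<longrightarrow> g i = 0"
    by metis
  have "g \<in> mult_space Y2 (kothe_dual (kothe_dual Y1))"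
    using pi_bound_imp_mult_bidual[OF C HC fac] support by blast
  then show ?thesis using fac by (auto simp: mult.assoc)
qed

end

lemma quotient_condition_iff:
  fixes a b c :: real
  shows "((b \<noteq> 0 \<longrightarrow> a / b = c) \<and> (b = 0 \<longrightarrow> a = 0)) \<longleftrightarrow> a = c * b"
  by (cases "b = 0") (auto simp: field_simps)

context diagonal_factorization
begin

lemma row_bound_imp_matrix_factors:
  assumes Y2_sub: "Y2 \<subseteq> kothe_dual (kothe_dual Y1)" and C: "C > 0" and HD: "row_test_bound C"
  shows "\<exists>g\<in>mult_space Y2 (kothe_dual (kothe_dual Y1)). \<forall>i j. T (unitv j) i = g i * h j * S (unitv j) i"
proof -
  have "\<exists>\<gamma>. \<bar>\<gamma>\<bar> \<le> C \<and> (\<forall>j. T (unitv j) n = \<gamma> * (h j * S (unitv j) n))" for n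
  proof -
    have "(\<Sum>j<m. r j * T (unitv j) n) \<le> C * \<bar>\<Sum>j<m. r j * (h j * S (unitv j) n)\<bar>"
      if "\<forall>j. \<bar>r j\<bar> \<le> 1" for m r
    proof -
      have "(\<Sum>j<m. h j * r j * S (unitv j) n) = (\<Sum>j<m. r j * (h j * S (unitv j) n))"
        by (rule sum.cong) (simp_all add: mult_ac)
      moreover have "(\<Sum>j<m. r j * T (unitv j) n) \<le> C * \<bar>\<Sum>j<m. h j * r j * S (unitv j) n\<bar>"
        using HD that by blast
      ultimately show ?thesis by simp
    qed
    from proportional_of_signed_sum_bound[OF less_imp_le[OF C] this] show ?thesis by blast
  qed
  then obtain g where g_le: "\<And>n. \<bar>g n\<bar> \<le> C"
    and fac: "\<And>n j. T (unitv j) n = g n * (h j * S (unitv j) n)"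
    by metis
  show ?thesis
    using bounded_mem_mult_bidual[OF Y2_sub g_le] fac by (auto simp: mult.assoc)
qed

lemma matrix_factors_imp_row_bound:
  assumes g: "g \<in> linf" and fac: "\<And>i j. T (unitv j) i = g i * h j * S (unitv j) i"
  shows "\<exists>C>0. row_test_bound C"
proof -
  obtain K where K: "\<And>i. \<bar>g i\<bar> \<le> K" using g unfolding linf_def by blast
  have "(\<Sum>j<m. r j * T (unitv j) n) \<le> (\<bar>K\<bar> + 1) * \<bar>\<Sum>j<m. h j * r j * S (unitv j) n\<bar>" for n m r
  proof -
    have "(\<Sum>j<m. r j * T (unitv j) n) = g n * (\<Sum>j<m. h j * r j * S (unitv j) n)"
      by (simp add: fac sum_distrib_left mult_ac)
    also have "\<dots> \<le> \<bar>g n\<bar> * \<bar>\<Sum>j<m. h j * r j * S (unitv j) n\<bar>"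
      by (metis abs_ge_self abs_mult)
    also have "\<dots> \<le> (\<bar>K\<bar> + 1) * \<bar>\<Sum>j<m. h j * r j * S (unitv j) n\<bar>"
      using K[of n] by (intro mult_right_mono) auto
    finally show ?thesis .
  qed
  then show ?thesis by (intro exI[of _ "\<bar>K\<bar> + 1"]) auto
qed

end

theorem proposition5p2:
  fixes X1 X2 Y1 Y2 :: "(nat \<Rightarrow> real) set"
    and NX1 NX2 NY1 NY2 :: "(nat \<Rightarrow> real) \<Rightarrow> real"
    and T S :: "(nat \<Rightarrow> real) \<Rightarrow> (nat \<Rightarrow> real)"
    and h :: "nat \<Rightarrow> real"
  assumes spX1: "banach_seq_space X1 NX1" and satX1: "saturated X1"
      and bX1: "unit_vectors_schauder_basis X1 NX1"
    and spX2: "banach_seq_space X2 NX2" and satX2: "saturated X2"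
      and bX2: "unit_vectors_schauder_basis X2 NX2"
    and spY1: "banach_seq_space Y1 NY1" and satY1: "saturated Y1"
      and bY1: "unit_vectors_schauder_basis Y1 NY1"
    and spY2: "banach_seq_space Y2 NY2" and satY2: "saturated Y2"
      and bY2: "unit_vectors_schauder_basis Y2 NY2"
    and bY1d: "unit_vectors_schauder_basis (kothe_dual Y1) (kothe_norm Y1 NY1)"
    and T: "bounded_linear_op X1 NX1 Y1 NY1 T" and Tnt: "nontrivial_op X1 T"
    and S: "bounded_linear_op X2 NX2 Y2 NY2 S" and Snt: "nontrivial_op X2 S"
    and satM: "saturated (mult_space Y2 (kothe_dual (kothe_dual Y1)))"
    and soc: "sigma_order_continuous Y2 NY2 \<or>
              sigma_order_continuous (kothe_dual Y1) (kothe_norm Y1 NY1)"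
    and h: "h \<in> mult_space X1 X2"
  shows
   "let a = (\<lambda>i j. T (unitv j) i); b = (\<lambda>i j. S (unitv j) i);
        G = mult_space Y2 (kothe_dual (kothe_dual Y1));
        condA = (\<exists>g\<in>G. \<forall>x\<in>X1. T x = (\<lambda>i. g i * S (\<lambda>j. h j * x j) i));
        condB = (\<exists>g\<in>G. \<forall>i j. (b i j \<noteq> 0 \<longrightarrow> a i j / b i j = g i * h j) \<and>
                               (b i j = 0 \<longrightarrow> a i j = 0));
        condC = (\<exists>C>0. \<forall>n m. \<forall>r :: nat \<Rightarrow> nat \<Rightarrow> real. (\<forall>i j. \<bar>r i j\<bar> \<le> 1) \<longrightarrow>
                   (\<Sum>i<n. \<Sum>j<m. r i j * a i j)
                     \<le> C * pi_norm Y2 NY2 (kothe_dual Y1) (kothe_norm Y1 NY1)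
                           (\<lambda>i. if i < n then (\<Sum>j<m. h j * r i j * b i j) else 0));
        condD = (\<exists>C>0. \<forall>n m. \<forall>r :: nat \<Rightarrow> real. (\<forall>j. \<bar>r j\<bar> \<le> 1) \<longrightarrow>
                   (\<Sum>j<m. r j * a n j) \<le> C * \<bar>\<Sum>j<m. h j * r j * b n j\<bar>)
    in (condA \<longleftrightarrow> condB) \<and> (condB \<longleftrightarrow> condC) \<and>
       (Y2 \<subseteq> kothe_dual (kothe_dual Y1) \<longrightarrow> condD \<longrightarrow> condA) \<and>
       (Y2 \<subseteq> kothe_dual (kothe_dual Y1) \<and> G = linf \<longrightarrow> (condD \<longleftrightarrow> condA))"
proof -
  interpret diagonal_factorization X1 NX1 Y1 NY1 T X2 NX2 Y2 NY2 S h
    by unfold_locales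
      (use spX1 spX2 spY1 spY2 T S bX1 bX2 bY1 bY2 h in \<open>auto simp: unit_vectors_schauder_basis_def\<close>)
  let ?G = "mult_space Y2 (kothe_dual (kothe_dual Y1))"
  let ?E = "\<exists>g\<in>?G. \<forall>i j. T (unitv j) i = g i * h j * S (unitv j) i"
  have A: "(\<exists>g\<in>?G. \<forall>x\<in>X1. T x = (\<lambda>i. g i * S (\<lambda>j. h j * x j) i)) \<longleftrightarrow> ?E"
    using factors_iff_matrix_factors by blast
  have B: "(\<exists>g\<in>?G. \<forall>i j. (S (unitv j) i \<noteq> 0 \<longrightarrow> T (unitv j) i / S (unitv j) i = g i * h j) \<and>
                          (S (unitv j) i = 0 \<longrightarrow> T (unitv j) i = 0)) \<longleftrightarrow> ?E"
    by (simp only: quotient_condition_iff)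
  have C: "(\<exists>C>0. pi_test_bound C) \<longleftrightarrow> ?E"
    using matrix_factors_imp_pi_bound pi_bound_imp_matrix_factors by blast
  have D: "Y2 \<subseteq> kothe_dual (kothe_dual Y1) \<Longrightarrow> (\<exists>C>0. row_test_bound C) \<Longrightarrow> ?E"
    using row_bound_imp_matrix_factors by blast
  have E: "?G = linf \<Longrightarrow> ?E \<Longrightarrow> \<exists>C>0. row_test_bound C"
    using matrix_factors_imp_row_bound by blast
  show ?thesis unfolding Let_def using A B C D E by blast
qed

end
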